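(* Let $0\le a<b<\infty$, $\Delta>0$, $\mathbb T_{a,b,\Delta}=\{(t_1,t_2)\in\mathbb R_+^2:a\le t_1\le b,\ t_1-\Delta\le t_2\le t_1\}$, $d(\mathbf t,\mathbf s)=\max\{|t_1-s_1|,|t_2-s_2|\}$. Let $X=\{X(\mathbf t),\mathbf t\in\mathbb T_{a,b,\Delta}\}$ be a centered separable Gaussian process with $m:=\sup_{\mathbf t\in\mathbb T_{a,b,\Delta}}\left(\mathbb E X(\mathbf t)^2\right)^{1/2}\in(0,\infty)$ and $\sup_{d(\mathbf t,\mathbf s)\le h,\ \mathbf t,\mathbf s\in\mathbb T_{a,b,\Delta}}\left(\mathbb E(X(\mathbf t)-X(\mathbf s))^2\right)^{1/2}\le ch^\beta$ for all $h>0$, where $c>0$, $\beta\in(0,1]$. Put $\widehat d=\max\{\frac2{b-a},\frac4\Delta\}$. Then for all $\lambda>0$, $0<\varepsilon<\beta$, $0<\theta<1$, \[ \mathbb E\exp\Big\{\lambda\sup_{\mathbf t\in\mathbb T_{a,b,\Delta}}|X(\mathbf t)|\Big\}\le2^{\frac2\varepsilon-2}(b-a)\Delta\exp\Big\{\frac{\lambda^2m^2}{2(1-\theta)^2}\Big\}\Big(\frac{c^{2/\beta}}{(1-\frac\varepsilon\beta)^{2/\varepsilon}(\theta m)^{2/\beta}}+\widehat d^{\,2}\Big). \] *)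

theory Defs
  imports "HOL-Probability.Probability"
begin

definition Tset :: "real \<Rightarrow> real \<Rightarrow> real \<Rightarrow> (real \<times> real) set" where
  "Tset a b \<Delta> = {(t1, t2). 0 \<le> t1 \<and> 0 \<le> t2 \<and> a \<le> t1 \<and> t1 \<le> b \<and> t1 - \<Delta> \<le> t2 \<and> t2 \<le> t1}"

definition dmax :: "real \<times> real \<Rightarrow> real \<times> real \<Rightarrow> real" where
  "dmax t s = max \<bar>fst t - fst s\<bar> \<bar>snd t - snd s\<bar>"

definition centered_gaussian_rv :: "'a measure \<Rightarrow> ('a \<Rightarrow> real) \<Rightarrow> bool" where
  "centered_gaussian_rv M Y \<longleftrightarrow> Y \<in> borel_measurable M \<and>
     ((AE \<omega> in M. Y \<omega> = 0) \<or>
      (\<exists>\<sigma>>0. distributed M lborel Y (\<lambda>x. ennreal (normal_density 0 \<sigma> x))))"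

definition centered_gaussian_process :: "'a measure \<Rightarrow> 'i set \<Rightarrow> ('i \<Rightarrow> 'a \<Rightarrow> real) \<Rightarrow> bool" where
  "centered_gaussian_process M T X \<longleftrightarrow>
     (\<forall>F c. finite F \<and> F \<subseteq> T \<longrightarrow> centered_gaussian_rv M (\<lambda>\<omega>. \<Sum>t\<in>F. c t * X t \<omega>))"

text \<open>Separability in the sense of Doob (sequential form): there is a countable
  separant S and a null set N such that off N every value X t is a limit of values on S
  along a sequence in S converging to t.\<close>
definition separable_process :: "'a measure \<Rightarrow> ('i::metric_space) set \<Rightarrow> ('i \<Rightarrow> 'a \<Rightarrow> real) \<Rightarrow> bool" where
  "separable_process M T X \<longleftrightarrow>
     (\<exists>S N. countable S \<and> S \<subseteq> T \<and> N \<in> null_sets M \<and>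
        (\<forall>\<omega>\<in>space M - N. \<forall>t\<in>T. \<exists>s. (\<forall>n. s n \<in> S) \<and> s \<longlonglongrightarrow> t \<and>
            (\<lambda>n. X (s n) \<omega>) \<longlonglongrightarrow> X t \<omega>))"

end

theory Submission
  imports Defs
begin

(*
  Chaining with geometric weights.  Fix a finite F in T and K levels.  On level j < K take a
  grid of T of mesh r_j, where c r_j^beta = m theta^(j+1), so that every point is linked to a
  grid point at which the increment of X has standard deviation at most m theta^(j+1); level K
  is F itself.  Every X s with s in F is then the sum of the increments along a chain through
  all levels.  The weighted AM-GM inequality with the weights (1 - theta) theta^j (and theta^K
  on level K) bounds exp (lam |X s|) by a weighted sum over all links of all levels that no
  longer depends on s, and the Gaussian bound E exp (mu |Y|) <= 2 exp (mu^2 sigma^2 / 2) gives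
    E sup_F exp (lam |X|) <= 2 exp (lam^2 m^2 / (2 (1 - theta)^2)) * prod_j N_j ^ w_j,
  where N_j is the size of level j.  The power mean inequality with exponent eps/2 and the grid
  sizes N_j <= (b - a) Delta (1 / (2 r_j) + dhat / 2)^2 bound the product by a constant plus a
  term theta^K |F|^(eps/2), which vanishes as K -> infinity.  Separability passes from finite
  sets F to T.
*)

lemma weighted_arith_geom_mean:
  fixes w x :: "'i \<Rightarrow> real"
  assumes "finite J" "\<And>j. j \<in> J \<Longrightarrow> 0 \<le> w j" "(\<Sum>j\<in>J. w j) = 1" "\<And>j. j \<in> J \<Longrightarrow> 0 < x j"
  shows "(\<Prod>j\<in>J. x j powr w j) \<le> (\<Sum>j\<in>J. w j * x j)"
proof -
  have "J \<noteq> {}" using assms(3) by auto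
  have "(\<Prod>j\<in>J. x j powr w j) = exp (\<Sum>j\<in>J. w j * ln (x j))"
    using assms(4) by (simp add: exp_sum[OF assms(1)] powr_def mult.commute less_imp_neq[symmetric] cong: prod.cong)
  also have "\<dots> \<le> (\<Sum>j\<in>J. w j * exp (ln (x j)))"
    using convex_on_sum[OF assms(1) \<open>J \<noteq> {}\<close> exp_convex assms(3), of "\<lambda>j. ln (x j)"] assms(2)
    by simp
  also have "\<dots> = (\<Sum>j\<in>J. w j * x j)"
    using assms(4) by simp
  finally show ?thesis .
qed

lemma weighted_geom_mean_le_power_mean:
  fixes w x :: "'i \<Rightarrow> real"
  assumes "finite J" "\<And>j. j \<in> J \<Longrightarrow> 0 \<le> w j" "(\<Sum>j\<in>J. w j) = 1" "\<And>j. j \<in> J \<Longrightarrow> 0 < x j"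
    and "0 < p"
  shows "(\<Prod>j\<in>J. x j powr w j) \<le> (\<Sum>j\<in>J. w j * x j powr p) powr (1 / p)"
proof -
  have "(\<Prod>j\<in>J. x j powr w j) = (\<Prod>j\<in>J. (x j powr p) powr w j) powr (1 / p)"
    using \<open>0 < p\<close> by (simp add: prod_powr_distrib powr_powr)
  also have "\<dots> \<le> (\<Sum>j\<in>J. w j * x j powr p) powr (1 / p)"
    using assms by (intro powr_mono2 prod_nonneg weighted_arith_geom_mean) (auto simp: less_imp_neq[symmetric])
  finally show ?thesis .
qed

lemma exp_sum_le_weighted:
  fixes w y B :: "'i \<Rightarrow> real"
  assumes "finite J" "\<And>j. j \<in> J \<Longrightarrow> 0 < w j" "(\<Sum>j\<in>J. w j) = 1" "\<And>j. j \<in> J \<Longrightarrow> 0 < B j"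
  shows "exp (\<Sum>j\<in>J. y j) \<le> (\<Prod>j\<in>J. B j powr w j) * (\<Sum>j\<in>J. w j * (exp (y j / w j) / B j))"
proof -
  have "exp (\<Sum>j\<in>J. y j) = (\<Prod>j\<in>J. (B j * (exp (y j / w j) / B j)) powr w j)"
    using assms(2,4) by (simp add: exp_sum[OF assms(1)] powr_def less_imp_neq[symmetric] cong: prod.cong)
  also have "\<dots> = (\<Prod>j\<in>J. B j powr w j * (exp (y j / w j) / B j) powr w j)"
    by (intro prod.cong refl powr_mult)
  also have "\<dots> = (\<Prod>j\<in>J. B j powr w j) * (\<Prod>j\<in>J. (exp (y j / w j) / B j) powr w j)"
    by (rule prod.distrib)
  also have "\<dots> \<le> (\<Prod>j\<in>J. B j powr w j) * (\<Sum>j\<in>J. w j * (exp (y j / w j) / B j))"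
    using assms by (intro mult_left_mono weighted_arith_geom_mean prod_nonneg) (auto simp: le_less)
  finally show ?thesis .
qed

lemma powr_add_le_add_powr:
  fixes x y e :: real
  assumes "0 \<le> x" "0 \<le> y" "0 < e" "e \<le> 1"
  shows "(x + y) powr e \<le> x powr e + y powr e"
proof (cases "x + y = 0")
  case True
  then show ?thesis using assms by simp
next
  case False
  define s where "s = x + y"
  have "s > 0" using False assms unfolding s_def by simp
  have le_powr: "t \<le> t powr e" if "0 \<le> t" "t \<le> 1" for t :: real
    using powr_mono'[of e 1 t] that assms by simp
  have "x / s + y / s = 1"
    using \<open>s > 0\<close> by (simp add: s_def add_divide_distrib[symmetric])
  then have "s powr e = s powr e * (x / s) + s powr e * (y / s)"
    by (metis distrib_left mult_1_right)
  also have "\<dots> \<le> s powr e * (x / s) powr e + s powr e * (y / s) powr e"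
    using \<open>s > 0\<close> assms by (intro add_mono mult_left_mono le_powr) (auto simp: s_def)
  also have "\<dots> = x powr e + y powr e"
    using \<open>s > 0\<close> assms by (simp add: powr_divide)
  finally show ?thesis unfolding s_def .
qed

lemma add_powr_le_two_powr:
  fixes p q s :: real
  assumes "0 < p" "0 < q" "1 \<le> s"
  shows "(p + q) powr s \<le> 2 powr (s - 1) * (p powr s + q powr s)"
proof -
  have "((p + q) / 2) powr s \<le> (p powr s + q powr s) / 2"
    using convex_onD[OF powr_convex[OF assms(3)], of "1/2" p q] assms by (simp add: field_simps)
  then have "2 powr s * ((p + q) / 2) powr s \<le> 2 powr s * ((p powr s + q powr s) / 2)"
    by simp
  then show ?thesis
    using assms by (simp add: powr_divide powr_diff)
qed

lemma powr_le_one_minus: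
  fixes \<theta> p :: real
  assumes "0 < \<theta>" "0 \<le> p" "p \<le> 1"
  shows "\<theta> powr p \<le> 1 - p * (1 - \<theta>)"
  using convex_onD[OF exp_convex, of p 0 "ln \<theta>"] assms by (simp add: powr_def algebra_simps)

definition geometric_weight :: "real \<Rightarrow> nat \<Rightarrow> nat \<Rightarrow> real" where
  "geometric_weight \<theta> K j = (if j < K then (1 - \<theta>) * \<theta> ^ j else \<theta> ^ K)"

lemma geometric_weight_pos: "0 < \<theta> \<Longrightarrow> \<theta> < 1 \<Longrightarrow> 0 < geometric_weight \<theta> K j"
  by (simp add: geometric_weight_def)

lemma sum_geometric_weight: "(\<Sum>j\<le>K. geometric_weight \<theta> K j) = 1"
proof -
  have "(\<Sum>j<K. (1 - \<theta>) * \<theta> ^ j) = 1 - \<theta> ^ K"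
    by (simp add: sum_distrib_left[symmetric] one_diff_power_eq)
  then show ?thesis
    by (simp add: lessThan_Suc_atMost[symmetric] geometric_weight_def)
qed

lemma sum_geometric_powr_le:
  fixes \<theta> x :: real
  assumes "0 < \<theta>" "\<theta> < 1" "0 < x" "x < 1"
  shows "(\<Sum>j<K. (1 - \<theta>) * \<theta> ^ j * \<theta> powr (- (j * x))) \<le> 1 / (1 - x)"
proof -
  define q where "q = \<theta> powr (1 - x)"
  have "q \<le> 1 - (1 - x) * (1 - \<theta>)"
    unfolding q_def using assms by (intro powr_le_one_minus) auto
  moreover have "0 < (1 - x) * (1 - \<theta>)"
    using assms by simp
  ultimately have q: "0 \<le> q" "q < 1" "(1 - x) * (1 - \<theta>) \<le> 1 - q"
    by (auto simp: q_def)
  have "\<theta> ^ j * \<theta> powr (- (j * x)) = q ^ j" for j :: nat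
    using assms by (simp add: q_def powr_realpow[symmetric] powr_powr powr_add[symmetric] algebra_simps)
  then have "(\<Sum>j<K. (1 - \<theta>) * \<theta> ^ j * \<theta> powr (- (j * x))) = (1 - \<theta>) * ((1 - q ^ K) / (1 - q))"
    using q by (simp add: sum_distrib_left[symmetric] mult.assoc sum_gp_strict)
  also have "\<dots> \<le> (1 - \<theta>) * (1 / (1 - q))"
    using assms q by (intro mult_left_mono divide_right_mono) auto
  also have "\<dots> \<le> 1 / (1 - x)"
    using assms q by (simp add: field_simps)
  finally show ?thesis .
qed

lemma sum_square_div_geometric_weight_le:
  fixes \<theta> m :: real
  assumes "0 < \<theta>" "\<theta> < 1"
  shows "(\<Sum>j\<le>K. (m * \<theta> ^ j)\<^sup>2 / geometric_weight \<theta> K j) \<le> m\<^sup>2 / (1 - \<theta>)\<^sup>2"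
proof -
  have "(\<Sum>j<K. (m * \<theta> ^ j)\<^sup>2 / geometric_weight \<theta> K j) = (\<Sum>j<K. m\<^sup>2 / (1 - \<theta>) * \<theta> ^ j)"
    using assms by (intro sum.cong refl) (simp add: geometric_weight_def power2_eq_square field_simps)
  also have "\<dots> = m\<^sup>2 / (1 - \<theta>) * (\<Sum>j<K. \<theta> ^ j)"
    by (simp add: sum_distrib_left)
  also have "\<dots> = m\<^sup>2 * (1 - \<theta> ^ K) / (1 - \<theta>)\<^sup>2"
    using assms by (simp add: sum_gp_strict power2_eq_square)
  finally have "(\<Sum>j\<le>K. (m * \<theta> ^ j)\<^sup>2 / geometric_weight \<theta> K j)
      = m\<^sup>2 * (1 - \<theta> ^ K) / (1 - \<theta>)\<^sup>2 + m\<^sup>2 * \<theta> ^ K"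
    using assms by (simp add: lessThan_Suc_atMost[symmetric] geometric_weight_def power2_eq_square power_mult_distrib)
  also have "\<dots> \<le> m\<^sup>2 * (1 - \<theta> ^ K) / (1 - \<theta>)\<^sup>2 + m\<^sup>2 * \<theta> ^ K / (1 - \<theta>)\<^sup>2"
  proof -
    have "0 < (1 - \<theta>)\<^sup>2" "(1 - \<theta>)\<^sup>2 \<le> 1"
      using assms by (auto intro: power_le_one)
    then show ?thesis
      using assms by (simp add: le_divide_eq mult_left_le)
  qed
  also have "\<dots> = m\<^sup>2 / (1 - \<theta>)\<^sup>2"
    by (simp add: add_divide_distrib[symmetric] algebra_simps)
  finally show ?thesis .
qed

section \<open>Moment generating functions of centered Gaussians\<close>

lemma nn_integral_normal_density_exp:
  assumes "0 < \<sigma>"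
  shows "(\<integral>\<^sup>+x. ennreal (normal_density 0 \<sigma> x) * ennreal (exp (\<mu> * x)) \<partial>lborel)
    = ennreal (exp (\<mu>\<^sup>2 * \<sigma>\<^sup>2 / 2))"
proof -
  have "normal_density 0 \<sigma> x * exp (\<mu> * x) = exp (\<mu>\<^sup>2 * \<sigma>\<^sup>2 / 2) * normal_density (\<mu> * \<sigma>\<^sup>2) \<sigma> x" for x
  proof -
    have "- x\<^sup>2 / (2 * \<sigma>\<^sup>2) + \<mu> * x = \<mu>\<^sup>2 * \<sigma>\<^sup>2 / 2 - (x - \<mu> * \<sigma>\<^sup>2)\<^sup>2 / (2 * \<sigma>\<^sup>2)"
      using assms by (simp add: field_simps power2_eq_square)
    then show ?thesis
      by (simp add: normal_density_def exp_add[symmetric] mult_ac)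
  qed
  then have "(\<integral>\<^sup>+x. ennreal (normal_density 0 \<sigma> x) * ennreal (exp (\<mu> * x)) \<partial>lborel)
      = (\<integral>\<^sup>+x. ennreal (exp (\<mu>\<^sup>2 * \<sigma>\<^sup>2 / 2)) * ennreal (normal_density (\<mu> * \<sigma>\<^sup>2) \<sigma> x) \<partial>lborel)"
    by (simp add: ennreal_mult'[symmetric])
  also have "\<dots> = ennreal (exp (\<mu>\<^sup>2 * \<sigma>\<^sup>2 / 2))"
    using assms by (simp add: nn_integral_cmult nn_integral_eq_integral)
  finally show ?thesis .
qed

lemma normal_distributed_nn_integral_exp_abs:
  assumes "prob_space M" "0 < \<sigma>" "distributed M lborel Y (\<lambda>x. ennreal (normal_density 0 \<sigma> x))"
  shows "(\<integral>\<^sup>+\<omega>. ennreal (exp (\<mu> * \<bar>Y \<omega>\<bar>)) \<partial>M) \<le> ennreal (2 * exp (\<mu>\<^sup>2 * \<sigma>\<^sup>2 / 2))"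
proof -
  have Y: "Y \<in> borel_measurable M"
    using distributed_measurable[OF assms(3)] by simp
  have mgf: "(\<integral>\<^sup>+\<omega>. ennreal (exp (\<nu> * Y \<omega>)) \<partial>M) = ennreal (exp (\<nu>\<^sup>2 * \<sigma>\<^sup>2 / 2))" for \<nu>
    using distributed_nn_integral[OF assms(3), of "\<lambda>x. ennreal (exp (\<nu> * x))"]
      nn_integral_normal_density_exp[OF assms(2)] by simp
  have "(\<integral>\<^sup>+\<omega>. ennreal (exp (\<mu> * \<bar>Y \<omega>\<bar>)) \<partial>M)
      \<le> (\<integral>\<^sup>+\<omega>. ennreal (exp (\<mu> * Y \<omega>)) + ennreal (exp ((- \<mu>) * Y \<omega>)) \<partial>M)"
    by (intro nn_integral_mono) (auto simp: abs_if ennreal_plus[symmetric] simp del: ennreal_plus)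
  also have "\<dots> = (\<integral>\<^sup>+\<omega>. ennreal (exp (\<mu> * Y \<omega>)) \<partial>M) + (\<integral>\<^sup>+\<omega>. ennreal (exp ((- \<mu>) * Y \<omega>)) \<partial>M)"
    using Y by (intro nn_integral_add) auto
  also have "\<dots> = ennreal (2 * exp (\<mu>\<^sup>2 * \<sigma>\<^sup>2 / 2))"
    unfolding mgf by (simp add: ennreal_plus[symmetric] del: ennreal_plus)
  finally show ?thesis .
qed

lemma centered_gaussian_rv_nn_integral_exp_abs:
  assumes "prob_space M" "centered_gaussian_rv M Y"
    and sd: "sqrt (prob_space.expectation M (\<lambda>\<omega>. (Y \<omega>)\<^sup>2)) \<le> \<sigma>"
  shows "(\<integral>\<^sup>+\<omega>. ennreal (exp (\<mu> * \<bar>Y \<omega>\<bar>)) \<partial>M) \<le> ennreal (2 * exp (\<mu>\<^sup>2 * \<sigma>\<^sup>2 / 2))"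
proof -
  interpret prob_space M by fact
  from \<open>centered_gaussian_rv M Y\<close> consider "AE \<omega> in M. Y \<omega> = 0"
    | \<tau> where "0 < \<tau>" "distributed M lborel Y (\<lambda>x. ennreal (normal_density 0 \<tau> x))"
    unfolding centered_gaussian_rv_def by blast
  then show ?thesis
  proof cases
    case 1
    then have "(\<integral>\<^sup>+\<omega>. ennreal (exp (\<mu> * \<bar>Y \<omega>\<bar>)) \<partial>M) = (\<integral>\<^sup>+\<omega>. 1 \<partial>M)"
      by (intro nn_integral_cong_AE) auto
    also have "\<dots> = ennreal 1"
      by (simp add: emeasure_space_1)
    also have "\<dots> \<le> ennreal (2 * exp (\<mu>\<^sup>2 * \<sigma>\<^sup>2 / 2))"
    proof -
      have "1 \<le> exp (\<mu>\<^sup>2 * \<sigma>\<^sup>2 / 2)"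
        by simp
      then show ?thesis
        by (intro ennreal_leI) linarith
    qed
    finally show ?thesis .
  next
    case (2 \<tau>)
    have "expectation (\<lambda>\<omega>. (Y \<omega>)\<^sup>2) = \<tau>\<^sup>2"
      using normal_distributed_variance[OF 2] normal_distributed_expectation[OF 2] by simp
    then have "\<tau>\<^sup>2 \<le> \<sigma>\<^sup>2"
      using sd 2(1) by (simp add: power_mono)
    have "(\<integral>\<^sup>+\<omega>. ennreal (exp (\<mu> * \<bar>Y \<omega>\<bar>)) \<partial>M) \<le> ennreal (2 * exp (\<mu>\<^sup>2 * \<tau>\<^sup>2 / 2))"
      using normal_distributed_nn_integral_exp_abs[OF prob_space_axioms 2] .
    also have "\<dots> \<le> ennreal (2 * exp (\<mu>\<^sup>2 * \<sigma>\<^sup>2 / 2))"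
      using mult_left_mono[OF \<open>\<tau>\<^sup>2 \<le> \<sigma>\<^sup>2\<close>, of "\<mu>\<^sup>2"] by (intro ennreal_leI) simp
    finally show ?thesis .
  qed
qed

lemma centered_gaussian_processD:
  assumes "centered_gaussian_process M T X" "finite F" "F \<subseteq> T"
  shows "centered_gaussian_rv M (\<lambda>\<omega>. \<Sum>t\<in>F. c t * X t \<omega>)"
  using assms unfolding centered_gaussian_process_def by blast

lemma centered_gaussian_process_diff:
  assumes "centered_gaussian_process M T X" "t \<in> T" "s \<in> T"
  shows "centered_gaussian_rv M (\<lambda>\<omega>. X t \<omega> - X s \<omega>)"
proof -
  define c where "c p = (if p = t then 1 else 0) - (if p = s then 1 else 0 :: real)" for p
  have "(\<Sum>p\<in>{t, s}. c p * X p \<omega>) = X t \<omega> - X s \<omega>" for \<omega>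
    by (cases "t = s") (simp_all add: c_def)
  then show ?thesis
    using centered_gaussian_processD[OF assms(1), of "{t, s}" c] assms(2,3) by simp
qed

lemma centered_gaussian_process_rv:
  assumes "centered_gaussian_process M T X" "t \<in> T"
  shows "centered_gaussian_rv M (X t)"
  using centered_gaussian_processD[OF assms(1), of "{t}" "\<lambda>_. 1"] assms(2) by simp

section \<open>Nets of the parameter set\<close>

lemma grid_cell_exists:
  fixes r y :: real and N :: nat
  assumes "0 < r" "0 \<le> y" "y \<le> r * (real N + 1)"
  obtains k where "k \<le> N" "r * real k \<le> y" "y \<le> r * (real k + 1)"
proof -
  define f where "f = nat \<lfloor>y / r\<rfloor>"
  have "real f = of_int \<lfloor>y / r\<rfloor>"
    using assms by (simp add: f_def)
  then have "real f \<le> y / r" "y / r < real f + 1"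
    by linarith+
  then have f: "r * real f \<le> y" "y \<le> r * (real f + 1)"
    using assms by (simp_all add: field_simps)
  show ?thesis
  proof (cases "f \<le> N")
    case True
    then show ?thesis
      using f by (intro that[of f]) auto
  next
    case False
    then have "r * real N \<le> r * real f"
      using assms by (intro mult_left_mono) auto
    then have "r * real N \<le> y"
      using f(1) by linarith
    then show ?thesis
      using assms by (intro that[of N]) auto
  qed
qed

definition interval_grid :: "real \<Rightarrow> real \<Rightarrow> real \<Rightarrow> real \<Rightarrow> real set" where
  "interval_grid lo hi r s =
    (\<lambda>k. min hi (lo - s + r + 2 * r * real k)) ` {..nat \<lfloor>(hi - lo + 2 * s) / (2 * r)\<rfloor>}"

lemma finite_interval_grid: "finite (interval_grid lo hi r s)"
  by (simp add: interval_grid_def)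

lemma interval_grid_nonempty: "interval_grid lo hi r s \<noteq> {}"
  by (simp add: interval_grid_def)

lemma interval_grid_subset:
  assumes "lo \<le> hi" "0 < r" "s \<le> r"
  shows "interval_grid lo hi r s \<subseteq> {lo..hi}"
proof -
  have "lo \<le> lo - s + r + 2 * r * real k" for k
    using assms mult_nonneg_nonneg[of "2 * r" "real k"] by linarith
  then show ?thesis
    using assms(1) by (auto simp: interval_grid_def)
qed

lemma card_interval_grid_le:
  assumes "lo \<le> hi" "0 < r" "0 \<le> s"
  shows "real (card (interval_grid lo hi r s)) \<le> (hi - lo + 2 * s) / (2 * r) + 1"
proof -
  have "card (interval_grid lo hi r s) \<le> card {..nat \<lfloor>(hi - lo + 2 * s) / (2 * r)\<rfloor>}"
    unfolding interval_grid_def by (rule card_image_le) simp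
  then have "real (card (interval_grid lo hi r s)) \<le> real (nat \<lfloor>(hi - lo + 2 * s) / (2 * r)\<rfloor>) + 1"
    by simp
  also have "\<dots> \<le> (hi - lo + 2 * s) / (2 * r) + 1"
    using assms by simp
  finally show ?thesis .
qed

lemma interval_grid_cover:
  assumes "0 < r" "0 \<le> s" "s \<le> r" "lo - s \<le> x" "x \<le> hi + s"
  shows "\<exists>p\<in>interval_grid lo hi r s. \<bar>x - p\<bar> \<le> r"
proof -
  define N where "N = nat \<lfloor>(hi - lo + 2 * s) / (2 * r)\<rfloor>"
  have "(hi - lo + 2 * s) / (2 * r) < real N + 1"
    using assms by (simp add: N_def)
  then have y: "x - lo + s \<le> 2 * r * (real N + 1)"
    using assms by (simp add: field_simps)
  have "\<exists>k. k \<le> N \<and> 2 * r * real k \<le> x - lo + s \<and> x - lo + s \<le> 2 * r * (real k + 1)"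
    by (rule grid_cell_exists[of "2 * r" "x - lo + s" N]) (use assms y in auto)
  then obtain k where k: "k \<le> N" "2 * r * real k \<le> x - lo + s" "x - lo + s \<le> 2 * r * (real k + 1)"
    by blast
  then have "\<bar>x - (lo - s + r + 2 * r * real k)\<bar> \<le> r"
    by (simp add: algebra_simps abs_le_iff)
  then have "\<bar>x - min hi (lo - s + r + 2 * r * real k)\<bar> \<le> r"
    using assms by (auto simp: min_def)
  then show ?thesis
    using k(1) by (auto simp: interval_grid_def N_def)
qed

definition Tset_grid :: "real \<Rightarrow> real \<Rightarrow> real \<Rightarrow> real \<Rightarrow> (real \<times> real) set" where
  "Tset_grid a b \<Delta> r = (SIGMA c:interval_grid a b r 0. interval_grid (max 0 (c - \<Delta>)) c r r)"

lemma finite_Tset_grid: "finite (Tset_grid a b \<Delta> r)"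
  by (simp add: Tset_grid_def finite_interval_grid)

lemma Tset_grid_nonempty: "Tset_grid a b \<Delta> r \<noteq> {}"
proof -
  obtain c where "c \<in> interval_grid a b r 0"
    using interval_grid_nonempty by blast
  moreover obtain g where "g \<in> interval_grid (max 0 (c - \<Delta>)) c r r"
    using interval_grid_nonempty by blast
  ultimately show ?thesis
    by (auto simp: Tset_grid_def)
qed

lemma Tset_grid_subset:
  assumes "0 \<le> a" "a \<le> b" "0 \<le> \<Delta>" "0 < r"
  shows "Tset_grid a b \<Delta> r \<subseteq> Tset a b \<Delta>"
proof
  fix p
  assume "p \<in> Tset_grid a b \<Delta> r"
  then obtain c g where p: "p = (c, g)" "c \<in> interval_grid a b r 0"
    "g \<in> interval_grid (max 0 (c - \<Delta>)) c r r"
    by (auto simp: Tset_grid_def)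
  then have "c \<in> {a..b}"
    using interval_grid_subset[of a b r 0] assms by auto
  then have "g \<in> {max 0 (c - \<Delta>)..c}"
    using p(3) interval_grid_subset[of "max 0 (c - \<Delta>)" c r r] assms by auto
  then show "p \<in> Tset a b \<Delta>"
    using \<open>c \<in> {a..b}\<close> assms(1) p(1) by (auto simp: Tset_def)
qed

lemma card_Tset_grid_le:
  assumes "0 \<le> a" "a \<le> b" "0 \<le> \<Delta>" "0 < r"
  shows "real (card (Tset_grid a b \<Delta> r)) \<le> ((b - a) / (2 * r) + 1) * (\<Delta> / (2 * r) + 2)"
proof -
  have column: "real (card (interval_grid (max 0 (c - \<Delta>)) c r r)) \<le> \<Delta> / (2 * r) + 2"
    if "c \<in> interval_grid a b r 0" for c
  proof -
    have "0 \<le> c"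
      using that interval_grid_subset[of a b r 0] assms by auto
    then have "real (card (interval_grid (max 0 (c - \<Delta>)) c r r)) \<le> (c - max 0 (c - \<Delta>) + 2 * r) / (2 * r) + 1"
      using assms by (intro card_interval_grid_le) auto
    also have "\<dots> \<le> (\<Delta> + 2 * r) / (2 * r) + 1"
      using assms by (intro add_right_mono divide_right_mono) auto
    also have "\<dots> = \<Delta> / (2 * r) + 2"
      using assms by (simp add: add_divide_distrib)
    finally show ?thesis .
  qed
  have "real (card (Tset_grid a b \<Delta> r)) = (\<Sum>c\<in>interval_grid a b r 0. real (card (interval_grid (max 0 (c - \<Delta>)) c r r)))"
    by (simp add: Tset_grid_def card_SigmaI finite_interval_grid)
  also have "\<dots> \<le> real (card (interval_grid a b r 0)) * (\<Delta> / (2 * r) + 2)"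
    using sum_mono[OF column] by simp
  also have "\<dots> \<le> ((b - a) / (2 * r) + 1) * (\<Delta> / (2 * r) + 2)"
    using card_interval_grid_le[of a b r 0] assms by (intro mult_right_mono) auto
  finally show ?thesis .
qed

lemma Tset_grid_cover:
  assumes "0 \<le> a" "0 < r" "t \<in> Tset a b \<Delta>"
  shows "\<exists>g\<in>Tset_grid a b \<Delta> r. dmax t g \<le> r"
proof -
  obtain t1 t2 where t: "t = (t1, t2)" "0 \<le> t2" "a \<le> t1" "t1 \<le> b" "t1 - \<Delta> \<le> t2" "t2 \<le> t1"
    using assms(3) by (auto simp: Tset_def)
  obtain c where c: "c \<in> interval_grid a b r 0" "\<bar>t1 - c\<bar> \<le> r"
    using interval_grid_cover[of r 0 a t1 b] assms t by auto
  have "max 0 (c - \<Delta>) - r \<le> t2" "t2 \<le> c + r"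
    using c(2) t assms(2) by (auto simp: abs_le_iff)
  then obtain g where "g \<in> interval_grid (max 0 (c - \<Delta>)) c r r" "\<bar>t2 - g\<bar> \<le> r"
    using interval_grid_cover[of r r "max 0 (c - \<Delta>)" t2 c] assms(2) by auto
  then show ?thesis
    using c t by (intro bexI[of _ "(c, g)"]) (auto simp: Tset_grid_def dmax_def)
qed

section \<open>Chaining\<close>

lemma nn_integral_weighted_sum_le:
  fixes f :: "'i \<Rightarrow> 'a \<Rightarrow> real"
  assumes "finite I" "\<And>i. i \<in> I \<Longrightarrow> f i \<in> borel_measurable M"
    and "\<And>i \<omega>. i \<in> I \<Longrightarrow> 0 \<le> f i \<omega>" "\<And>i. i \<in> I \<Longrightarrow> 0 \<le> c i" "\<And>i. i \<in> I \<Longrightarrow> 0 \<le> b i"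
    and "\<And>i. i \<in> I \<Longrightarrow> (\<integral>\<^sup>+\<omega>. ennreal (f i \<omega>) \<partial>M) \<le> ennreal (b i)"
  shows "(\<integral>\<^sup>+\<omega>. ennreal (\<Sum>i\<in>I. c i * f i \<omega>) \<partial>M) \<le> ennreal (\<Sum>i\<in>I. c i * b i)"
proof -
  have "(\<integral>\<^sup>+\<omega>. ennreal (\<Sum>i\<in>I. c i * f i \<omega>) \<partial>M) = (\<integral>\<^sup>+\<omega>. (\<Sum>i\<in>I. ennreal (c i) * ennreal (f i \<omega>)) \<partial>M)"
    using assms by (intro nn_integral_cong) (simp add: sum_ennreal[symmetric] ennreal_mult)
  also have "\<dots> = (\<Sum>i\<in>I. ennreal (c i) * (\<integral>\<^sup>+\<omega>. ennreal (f i \<omega>) \<partial>M))"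
    using assms by (simp add: nn_integral_sum nn_integral_cmult)
  also have "\<dots> \<le> (\<Sum>i\<in>I. ennreal (c i) * ennreal (b i))"
    using assms by (intro sum_mono mult_left_mono) auto
  also have "\<dots> = ennreal (\<Sum>i\<in>I. c i * b i)"
    using assms by (simp add: sum_ennreal[symmetric] ennreal_mult)
  finally show ?thesis .
qed

text \<open>The weighted AM-GM inequality turns the exponential of a sum along one chain into a sum
  over all links of all levels, which no longer depends on the chain.\<close>

lemma exp_abs_le_sum_links:
  fixes d :: "'j \<Rightarrow> 'q \<Rightarrow> real" and U :: "'j \<Rightarrow> 'q set"
  assumes J: "finite J" "\<And>j. j \<in> J \<Longrightarrow> 0 < w j" "(\<Sum>j\<in>J. w j) = 1" "\<And>j. j \<in> J \<Longrightarrow> 0 < B j"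
    and U: "\<And>j. j \<in> J \<Longrightarrow> finite (U j)" "\<And>j. j \<in> J \<Longrightarrow> v j \<in> U j"
    and y: "\<bar>y\<bar> \<le> (\<Sum>j\<in>J. \<bar>d j (v j)\<bar>)" and "0 \<le> lam"
  shows "exp (lam * \<bar>y\<bar>)
    \<le> (\<Sum>(j, u)\<in>Sigma J U. (\<Prod>i\<in>J. B i powr w i) * w j / B j * exp (lam / w j * \<bar>d j u\<bar>))"
proof -
  define P where "P = (\<Prod>i\<in>J. B i powr w i)"
  have "0 \<le> P"
    by (simp add: P_def prod_nonneg)
  have "exp (lam * \<bar>y\<bar>) \<le> exp (\<Sum>j\<in>J. lam * \<bar>d j (v j)\<bar>)"
    using mult_left_mono[OF y \<open>0 \<le> lam\<close>] by (simp add: sum_distrib_left)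
  also have "\<dots> \<le> P * (\<Sum>j\<in>J. w j * (exp (lam * \<bar>d j (v j)\<bar> / w j) / B j))"
    unfolding P_def using J by (rule exp_sum_le_weighted)
  also have "\<dots> = (\<Sum>j\<in>J. P * w j / B j * exp (lam / w j * \<bar>d j (v j)\<bar>))"
    by (simp add: sum_distrib_left mult.assoc)
  also have "\<dots> \<le> (\<Sum>j\<in>J. \<Sum>u\<in>U j. P * w j / B j * exp (lam / w j * \<bar>d j u\<bar>))"
    using U J(2,4) \<open>0 \<le> P\<close> by (intro sum_mono member_le_sum) (auto simp: less_imp_le)
  also have "\<dots> = (\<Sum>(j, u)\<in>Sigma J U. P * w j / B j * exp (lam / w j * \<bar>d j u\<bar>))"
    using J(1) U(1) by (intro sum.Sigma) auto
  finally show ?thesis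
    by (simp add: P_def)
qed

lemma chaining_nn_integral_SUP_exp_le:
  fixes Y :: "'p \<Rightarrow> 'a \<Rightarrow> real" and D :: "'j \<Rightarrow> 'q \<Rightarrow> 'a \<Rightarrow> real" and U :: "'j \<Rightarrow> 'q set"
  assumes J: "finite J" and w: "\<And>j. j \<in> J \<Longrightarrow> 0 < w j" "(\<Sum>j\<in>J. w j) = 1"
    and U: "\<And>j. j \<in> J \<Longrightarrow> finite (U j)" "\<And>j. j \<in> J \<Longrightarrow> U j \<noteq> {}"
    and D: "\<And>j u. j \<in> J \<Longrightarrow> u \<in> U j \<Longrightarrow> D j u \<in> borel_measurable M"
    and E: "\<And>j. j \<in> J \<Longrightarrow> 0 < E j"
    and mgf: "\<And>j u. j \<in> J \<Longrightarrow> u \<in> U j \<Longrightarrow>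
      (\<integral>\<^sup>+\<omega>. ennreal (exp (lam / w j * \<bar>D j u \<omega>\<bar>)) \<partial>M) \<le> ennreal (E j)"
    and chain: "\<And>s. s \<in> F \<Longrightarrow> \<exists>v. (\<forall>j\<in>J. v j \<in> U j) \<and> (\<forall>\<omega>. \<bar>Y s \<omega>\<bar> \<le> (\<Sum>j\<in>J. \<bar>D j (v j) \<omega>\<bar>))"
    and "0 \<le> lam"
  shows "(\<integral>\<^sup>+\<omega>. (SUP s\<in>F. ennreal (exp (lam * \<bar>Y s \<omega>\<bar>))) \<partial>M)
    \<le> ennreal (\<Prod>j\<in>J. (real (card (U j)) * E j) powr w j)"
proof -
  define B where "B j = real (card (U j)) * E j" for j
  have B: "0 < B j" if "j \<in> J" for j
    using U E that by (simp add: B_def card_gt_0_iff)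
  define P where "P = (\<Prod>j\<in>J. B j powr w j)"
  define c :: "'j \<times> 'q \<Rightarrow> real" where "c = (\<lambda>(j, u). P * w j / B j)"
  define f where "f = (\<lambda>(j, u) \<omega>. exp (lam / w j * \<bar>D j u \<omega>\<bar>))"
  have "0 \<le> P"
    by (simp add: P_def prod_nonneg)
  have "(\<integral>\<^sup>+\<omega>. (SUP s\<in>F. ennreal (exp (lam * \<bar>Y s \<omega>\<bar>))) \<partial>M)
      \<le> (\<integral>\<^sup>+\<omega>. ennreal (\<Sum>i\<in>Sigma J U. c i * f i \<omega>) \<partial>M)"
  proof (intro nn_integral_mono SUP_least ennreal_leI)
    fix s \<omega>
    assume "s \<in> F"
    then obtain v where "\<forall>j\<in>J. v j \<in> U j" "\<bar>Y s \<omega>\<bar> \<le> (\<Sum>j\<in>J. \<bar>D j (v j) \<omega>\<bar>)"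
      using chain by blast
    then have "exp (lam * \<bar>Y s \<omega>\<bar>)
        \<le> (\<Sum>(j, u)\<in>Sigma J U. P * w j / B j * exp (lam / w j * \<bar>D j u \<omega>\<bar>))"
      unfolding P_def using J w B U(1) \<open>0 \<le> lam\<close> by (intro exp_abs_le_sum_links) auto
    then show "exp (lam * \<bar>Y s \<omega>\<bar>) \<le> (\<Sum>i\<in>Sigma J U. c i * f i \<omega>)"
      by (simp add: c_def f_def split_def)
  qed
  also have "\<dots> \<le> ennreal (\<Sum>i\<in>Sigma J U. c i * (\<lambda>(j, u). E j) i)"
    using J U D w B E mgf \<open>0 \<le> P\<close>
    by (intro nn_integral_weighted_sum_le) (auto simp: c_def f_def less_imp_le)
  also have "(\<Sum>i\<in>Sigma J U. c i * (\<lambda>(j, u). E j) i) = (\<Sum>(j, u)\<in>Sigma J U. P * w j / B j * E j)"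
    by (intro sum.cong) (auto simp: c_def)
  also have "\<dots> = (\<Sum>j\<in>J. \<Sum>u\<in>U j. P * w j / B j * E j)"
    using J U by (intro sum.Sigma[symmetric]) auto
  also have "\<dots> = (\<Sum>j\<in>J. P * w j)"
  proof (intro sum.cong refl)
    fix j
    assume "j \<in> J"
    then have "card (U j) \<noteq> 0" "E j \<noteq> 0"
      using U E by (auto simp: card_gt_0_iff less_imp_neq[symmetric])
    then show "(\<Sum>u\<in>U j. P * w j / B j * E j) = P * w j"
      by (simp add: B_def)
  qed
  also have "\<dots> = ennreal (\<Prod>j\<in>J. (real (card (U j)) * E j) powr w j)"
    by (simp add: sum_distrib_left[symmetric] w(2) P_def B_def)
  finally show ?thesis .
qed

definition link_increment :: "('p \<Rightarrow> 'a \<Rightarrow> real) \<Rightarrow> (nat \<Rightarrow> 'p \<Rightarrow> 'p) \<Rightarrow> nat \<Rightarrow> 'p \<Rightarrow> 'a \<Rightarrow> real" where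
  "link_increment X \<pi> j u \<omega> = (case j of 0 \<Rightarrow> X u \<omega> | Suc i \<Rightarrow> X u \<omega> - X (\<pi> i u) \<omega>)"

text \<open>The chain from \<open>s\<close> visits \<open>foldr \<pi> [j..<K] s = \<pi> j (\<pi> (j + 1) (\<dots> (\<pi> (K - 1) s)))\<close>
  at level \<open>j\<close>.\<close>

lemma sum_link_increment_foldr:
  "(\<Sum>j\<le>K. link_increment X \<pi> j (foldr \<pi> [j..<K] s) \<omega>) = X s \<omega>"
proof -
  have "(\<Sum>j<K. link_increment X \<pi> (Suc j) (foldr \<pi> [Suc j..<K] s) \<omega>)
      = (\<Sum>j<K. X (foldr \<pi> [Suc j..<K] s) \<omega> - X (foldr \<pi> [j..<K] s) \<omega>)"
    by (intro sum.cong refl) (simp add: link_increment_def upt_conv_Cons)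
  then show ?thesis
    using sum_lessThan_telescope[of "\<lambda>j. X (foldr \<pi> [j..<K] s) \<omega>" K]
    by (simp add: sum.atMost_shift link_increment_def)
qed

lemma foldr_mem:
  assumes "\<And>j t. t \<in> T \<Longrightarrow> \<pi> j t \<in> T" "s \<in> T"
  shows "foldr \<pi> js s \<in> T"
  using assms by (induction js) auto

section \<open>Entropy estimates\<close>

lemma net_card_bound_le_square:
  fixes a b \<Delta> r :: real
  assumes "a < b" "0 < \<Delta>" "0 < r"
  shows "((b - a) / (2 * r) + 1) * (\<Delta> / (2 * r) + 2)
    \<le> (b - a) * \<Delta> * (1 / (2 * r) + max (2 / (b - a)) (4 / \<Delta>) / 2)\<^sup>2"
proof -
  define v where "v = max (2 / (b - a)) (4 / \<Delta>)"
  define y where "y = 1 / (2 * r) + v / 2"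
  have "2 / (b - a) \<le> v" "4 / \<Delta> \<le> v"
    by (simp_all add: v_def)
  moreover have "0 < 2 / (b - a)"
    using assms by simp
  ultimately have v: "0 < v" "1 / (b - a) \<le> v / 2" "2 / \<Delta> \<le> v / 2"
    by linarith+
  have "(b - a) / (2 * r) + 1 = (b - a) * (1 / (2 * r) + 1 / (b - a))"
    using assms by (simp add: field_simps)
  also have "\<dots> \<le> (b - a) * y"
    using assms v by (simp add: y_def)
  finally have 1: "(b - a) / (2 * r) + 1 \<le> (b - a) * y" .
  have "\<Delta> / (2 * r) + 2 = \<Delta> * (1 / (2 * r) + 2 / \<Delta>)"
    using assms by (simp add: field_simps)
  also have "\<dots> \<le> \<Delta> * y"
    using assms v by (simp add: y_def)
  finally have 2: "\<Delta> / (2 * r) + 2 \<le> \<Delta> * y" .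
  have "((b - a) / (2 * r) + 1) * (\<Delta> / (2 * r) + 2) \<le> ((b - a) * y) * (\<Delta> * y)"
    using mult_mono[OF 1 2] assms v by (simp add: y_def)
  then show ?thesis
    by (simp add: v_def y_def power2_eq_square mult_ac)
qed

lemma net_card_powr_le:
  fixes a b \<Delta> r \<epsilon> N :: real
  assumes "a < b" "0 < \<Delta>" "0 < r" "0 < \<epsilon>" "\<epsilon> \<le> 1" "0 \<le> N"
    and N: "N \<le> ((b - a) / (2 * r) + 1) * (\<Delta> / (2 * r) + 2)"
  shows "N powr (\<epsilon> / 2)
    \<le> ((b - a) * \<Delta>) powr (\<epsilon> / 2) * ((2 * r) powr (- \<epsilon>) + (max (2 / (b - a)) (4 / \<Delta>) / 2) powr \<epsilon>)"
proof -
  define v where "v = max (2 / (b - a)) (4 / \<Delta>)"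
  define y where "y = 1 / (2 * r) + v / 2"
  have "0 < v"
    using assms by (simp add: v_def less_max_iff_disj)
  then have "0 < y"
    unfolding y_def using assms by (intro add_pos_pos) auto
  have "N powr (\<epsilon> / 2) \<le> (((b - a) * \<Delta>) * y\<^sup>2) powr (\<epsilon> / 2)"
    using N net_card_bound_le_square[of a b \<Delta> r] assms by (intro powr_mono2) (auto simp: v_def y_def)
  also have "\<dots> = ((b - a) * \<Delta>) powr (\<epsilon> / 2) * (y powr 2) powr (\<epsilon> / 2)"
    using \<open>0 < y\<close> by (simp add: powr_mult)
  also have "\<dots> = ((b - a) * \<Delta>) powr (\<epsilon> / 2) * y powr \<epsilon>"
    by (simp add: powr_powr)
  also have "y powr \<epsilon> \<le> (1 / (2 * r)) powr \<epsilon> + (v / 2) powr \<epsilon>"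
    unfolding y_def using assms \<open>0 < v\<close> by (intro powr_add_le_add_powr) auto
  also have "(1 / (2 * r)) powr \<epsilon> = (2 * r) powr (- \<epsilon>)"
    using assms by (simp add: powr_minus_divide powr_divide)
  finally show ?thesis
    using assms by (simp add: v_def mult_left_mono)
qed

lemma sum_geometric_net_card_le:
  fixes a b \<Delta> r0 \<theta> \<beta> \<epsilon> :: real and N :: "nat \<Rightarrow> real"
  assumes "a < b" "0 < \<Delta>" "0 < r0" "0 < \<theta>" "\<theta> < 1" "0 < \<epsilon>" "\<epsilon> < \<beta>" "\<beta> \<le> 1"
    and N: "\<And>j. j < K \<Longrightarrow> 0 \<le> N j \<and> N j \<le> ((b - a) / (2 * (r0 * \<theta> powr (j / \<beta>))) + 1) *
      (\<Delta> / (2 * (r0 * \<theta> powr (j / \<beta>))) + 2)"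
  shows "(\<Sum>j<K. (1 - \<theta>) * \<theta> ^ j * N j powr (\<epsilon> / 2))
    \<le> ((b - a) * \<Delta>) powr (\<epsilon> / 2) * ((2 * r0) powr (- \<epsilon>) / (1 - \<epsilon> / \<beta>)
      + (max (2 / (b - a)) (4 / \<Delta>) / 2) powr \<epsilon>)"
proof -
  define A where "A = ((b - a) * \<Delta>) powr (\<epsilon> / 2)"
  define V where "V = (max (2 / (b - a)) (4 / \<Delta>) / 2) powr \<epsilon>"
  define R where "R = (2 * r0) powr (- \<epsilon>)"
  have "N j powr (\<epsilon> / 2) \<le> A * (R * \<theta> powr (- (j * (\<epsilon> / \<beta>))) + V)" if "j < K" for j
  proof -
    have "(2 * (r0 * \<theta> powr (j / \<beta>))) powr (- \<epsilon>) = R * \<theta> powr (- (j * (\<epsilon> / \<beta>)))"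
      by (simp add: R_def powr_mult powr_powr mult_ac)
    then show ?thesis
      using net_card_powr_le[of a b \<Delta> "r0 * \<theta> powr (j / \<beta>)" \<epsilon> "N j"] N[OF that] assms
      by (simp add: A_def V_def)
  qed
  then have "(\<Sum>j<K. (1 - \<theta>) * \<theta> ^ j * N j powr (\<epsilon> / 2))
      \<le> (\<Sum>j<K. (1 - \<theta>) * \<theta> ^ j * (A * (R * \<theta> powr (- (j * (\<epsilon> / \<beta>))) + V)))"
    using assms by (intro sum_mono mult_left_mono) auto
  also have "\<dots> = A * R * (\<Sum>j<K. (1 - \<theta>) * \<theta> ^ j * \<theta> powr (- (j * (\<epsilon> / \<beta>))))
      + A * V * (\<Sum>j<K. (1 - \<theta>) * \<theta> ^ j)"
    by (simp add: sum_distrib_left sum.distrib ring_distribs mult_ac)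
  also have "\<dots> \<le> A * R * (1 / (1 - \<epsilon> / \<beta>)) + A * V * 1"
  proof -
    have "(\<Sum>j<K. (1 - \<theta>) * \<theta> ^ j) = 1 - \<theta> ^ K"
      by (simp add: sum_distrib_left[symmetric] one_diff_power_eq)
    then have "(\<Sum>j<K. (1 - \<theta>) * \<theta> ^ j) \<le> 1"
      using assms by simp
    moreover have "(\<Sum>j<K. (1 - \<theta>) * \<theta> ^ j * \<theta> powr (- (j * (\<epsilon> / \<beta>)))) \<le> 1 / (1 - \<epsilon> / \<beta>)"
      using assms by (intro sum_geometric_powr_le) auto
    ultimately show ?thesis
      by (intro mult_left_mono add_mono) (auto simp: A_def V_def R_def)
  qed
  finally show ?thesis
    by (simp add: A_def V_def R_def algebra_simps)
qed

lemma two_mul_entropy_constant_powr_le: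
  fixes A r0 v \<epsilon> x :: real
  assumes "0 < A" "0 < r0" "0 < v" "0 < \<epsilon>" "\<epsilon> \<le> 2" "0 < x" "x < 1"
  shows "2 * (A powr (\<epsilon> / 2) * ((2 * r0) powr (- \<epsilon>) / (1 - x) + (v / 2) powr \<epsilon>)) powr (2 / \<epsilon>)
    \<le> 2 powr (2 / \<epsilon> - 2) * A * (r0 powr (- 2) / (1 - x) powr (2 / \<epsilon>) + v\<^sup>2)"
proof -
  define s where "s = 2 / \<epsilon>"
  have "1 \<le> s" "- \<epsilon> * s = - 2" "\<epsilon> * s = 2" "\<epsilon> / 2 * s = 1"
    using assms by (simp_all add: s_def)
  have "((2 * r0) powr (- \<epsilon>)) powr s = (2 * r0) powr (- 2)"
    unfolding powr_powr \<open>- \<epsilon> * s = - 2\<close> ..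
  also have "\<dots> = r0 powr (- 2) / 4"
    using assms by (simp add: powr_neg_numeral power_mult_distrib)
  finally have R0: "((2 * r0) powr (- \<epsilon>)) powr s = r0 powr (- 2) / 4" .
  have P: "((2 * r0) powr (- \<epsilon>) / (1 - x)) powr s = r0 powr (- 2) / (1 - x) powr s / 4"
    unfolding powr_divide R0 by simp
  have "((v / 2) powr \<epsilon>) powr s = (v / 2) powr 2"
    unfolding powr_powr \<open>\<epsilon> * s = 2\<close> ..
  then have V: "((v / 2) powr \<epsilon>) powr s = v\<^sup>2 / 4"
    using assms by (simp add: power_divide)
  have "(A powr (\<epsilon> / 2) * ((2 * r0) powr (- \<epsilon>) / (1 - x) + (v / 2) powr \<epsilon>)) powr s
      = A * ((2 * r0) powr (- \<epsilon>) / (1 - x) + (v / 2) powr \<epsilon>) powr s"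
    using assms \<open>\<epsilon> / 2 * s = 1\<close> by (simp add: powr_mult powr_powr)
  also have "\<dots> \<le> A * (2 powr (s - 1) * (((2 * r0) powr (- \<epsilon>) / (1 - x)) powr s + ((v / 2) powr \<epsilon>) powr s))"
    using assms \<open>1 \<le> s\<close> by (intro mult_left_mono add_powr_le_two_powr) auto
  also have "\<dots> = 2 powr (s - 1) / 4 * A * (r0 powr (- 2) / (1 - x) powr s + v\<^sup>2)"
    unfolding P V by (simp add: algebra_simps add_divide_distrib)
  also have "2 powr (s - 1) / 4 = 2 powr (s - 2) / 2"
    by (simp add: powr_diff)
  finally show ?thesis
    by (simp add: s_def)
qed

lemma prod_geometric_levels_le:
  fixes N :: "nat \<Rightarrow> real" and \<theta> \<epsilon> lam m :: real
  assumes "0 < \<theta>" "\<theta> < 1" "0 < \<epsilon>" "\<And>j. j \<le> K \<Longrightarrow> 0 < N j"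
  shows "(\<Prod>j\<le>K. (N j * (2 * exp ((lam / geometric_weight \<theta> K j)\<^sup>2 * (m * \<theta> ^ j)\<^sup>2 / 2)))
      powr geometric_weight \<theta> K j)
    \<le> 2 * exp (lam\<^sup>2 * m\<^sup>2 / (2 * (1 - \<theta>)\<^sup>2))
      * (\<Sum>j\<le>K. geometric_weight \<theta> K j * N j powr (\<epsilon> / 2)) powr (2 / \<epsilon>)"
proof -
  define w where "w = geometric_weight \<theta> K"
  have w: "0 < w j" for j
    using assms by (simp add: w_def geometric_weight_pos)
  have "(\<Prod>j\<le>K. (N j * (2 * exp ((lam / w j)\<^sup>2 * (m * \<theta> ^ j)\<^sup>2 / 2))) powr w j)
      = (\<Prod>j\<le>K. 2 powr w j * (exp (lam\<^sup>2 / 2 * ((m * \<theta> ^ j)\<^sup>2 / w j)) * N j powr w j))"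
  proof (intro prod.cong refl)
    fix j
    have "exp ((lam / w j)\<^sup>2 * (m * \<theta> ^ j)\<^sup>2 / 2) powr w j = exp (lam\<^sup>2 / 2 * ((m * \<theta> ^ j)\<^sup>2 / w j))"
      using w[of j] by (simp add: powr_def power2_eq_square field_simps)
    then show "(N j * (2 * exp ((lam / w j)\<^sup>2 * (m * \<theta> ^ j)\<^sup>2 / 2))) powr w j
        = 2 powr w j * (exp (lam\<^sup>2 / 2 * ((m * \<theta> ^ j)\<^sup>2 / w j)) * N j powr w j)"
      by (simp add: powr_mult)
  qed
  also have "\<dots> = 2 * exp (lam\<^sup>2 / 2 * (\<Sum>j\<le>K. (m * \<theta> ^ j)\<^sup>2 / w j)) * (\<Prod>j\<le>K. N j powr w j)"
    using sum_geometric_weight[of \<theta> K]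
    by (simp add: prod.distrib powr_sum[symmetric] exp_sum[symmetric] sum_distrib_left w_def)
  also have "\<dots> \<le> 2 * exp (lam\<^sup>2 * m\<^sup>2 / (2 * (1 - \<theta>)\<^sup>2)) * (\<Sum>j\<le>K. w j * N j powr (\<epsilon> / 2)) powr (2 / \<epsilon>)"
  proof (rule mult_mono)
    have "lam\<^sup>2 / 2 * (\<Sum>j\<le>K. (m * \<theta> ^ j)\<^sup>2 / w j) \<le> lam\<^sup>2 / 2 * (m\<^sup>2 / (1 - \<theta>)\<^sup>2)"
      using sum_square_div_geometric_weight_le[of \<theta> m K] assms by (intro mult_left_mono) (auto simp: w_def)
    then show "2 * exp (lam\<^sup>2 / 2 * (\<Sum>j\<le>K. (m * \<theta> ^ j)\<^sup>2 / w j)) \<le> 2 * exp (lam\<^sup>2 * m\<^sup>2 / (2 * (1 - \<theta>)\<^sup>2))"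
      by simp
    show "(\<Prod>j\<le>K. N j powr w j) \<le> (\<Sum>j\<le>K. w j * N j powr (\<epsilon> / 2)) powr (2 / \<epsilon>)"
      using weighted_geom_mean_le_power_mean[of "{..K}" w N "\<epsilon> / 2"] sum_geometric_weight[of \<theta> K] w assms
      by (simp add: w_def less_imp_le)
  qed (auto simp: prod_nonneg)
  finally show ?thesis
    by (simp add: w_def)
qed

section \<open>Separable processes\<close>

lemma countable_eq_UN_from_nat_into_atMost:
  assumes "S \<noteq> {}" "countable S"
  shows "S = (\<Union>n. from_nat_into S ` {..n})"
proof (intro antisym subsetI)
  fix x
  assume "x \<in> S"
  then obtain n where "x = from_nat_into S n"
    using range_from_nat_into[OF assms] by (metis rangeE)
  then show "x \<in> (\<Union>n. from_nat_into S ` {..n})"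
    by blast
qed (use from_nat_into[OF assms(1)] in auto)

lemma nn_integral_SUP_countable_le:
  fixes g :: "'i \<Rightarrow> 'a \<Rightarrow> ennreal"
  assumes "countable S" "\<And>s. s \<in> S \<Longrightarrow> g s \<in> borel_measurable M"
    and "\<And>F. finite F \<Longrightarrow> F \<subseteq> S \<Longrightarrow> F \<noteq> {} \<Longrightarrow> (\<integral>\<^sup>+\<omega>. (SUP s\<in>F. g s \<omega>) \<partial>M) \<le> R"
  shows "(\<integral>\<^sup>+\<omega>. (SUP s\<in>S. g s \<omega>) \<partial>M) \<le> R"
proof (cases "S = {}")
  case True
  then show ?thesis
    by (simp add: bot_ennreal)
next
  case False
  define Sn where "Sn n = from_nat_into S ` {..n}" for n
  have Sn: "finite (Sn n)" "Sn n \<subseteq> S" "Sn n \<noteq> {}" for n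
    using from_nat_into[OF False] by (auto simp: Sn_def)
  have "S = (\<Union>n. Sn n)"
    unfolding Sn_def using countable_eq_UN_from_nat_into_atMost[OF False assms(1)] .
  then have "(\<integral>\<^sup>+\<omega>. (SUP s\<in>S. g s \<omega>) \<partial>M) = (\<integral>\<^sup>+\<omega>. (SUP n. SUP s\<in>Sn n. g s \<omega>) \<partial>M)"
    by (simp add: SUP_UNION)
  also have "\<dots> = (SUP n. \<integral>\<^sup>+\<omega>. (SUP s\<in>Sn n. g s \<omega>) \<partial>M)"
  proof (rule nn_integral_monotone_convergence_SUP)
    show "incseq (\<lambda>n \<omega>. SUP s\<in>Sn n. g s \<omega>)"
      by (auto simp: incseq_def le_fun_def Sn_def intro!: SUP_subset_mono)
    show "(\<lambda>\<omega>. SUP s\<in>Sn n. g s \<omega>) \<in> borel_measurable M" for n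
      using Sn(1,2)[of n] by (intro borel_measurable_SUP) (auto intro: countable_finite assms(2))
  qed
  also have "\<dots> \<le> R"
    using Sn assms(3) by (intro SUP_least) auto
  finally show ?thesis .
qed

lemma separable_process_SUP_le_AE:
  fixes f :: "real \<Rightarrow> ennreal"
  assumes "separable_process M T X" "continuous_on UNIV f"
  obtains S where "countable S" "S \<subseteq> T" "AE \<omega> in M. (SUP t\<in>T. f (X t \<omega>)) \<le> (SUP s\<in>S. f (X s \<omega>))"
proof -
  obtain S N where S: "countable S" "S \<subseteq> T" "N \<in> null_sets M"
    and approx: "\<And>\<omega> t. \<omega> \<in> space M - N \<Longrightarrow> t \<in> T \<Longrightarrow>
      \<exists>s. (\<forall>n. s n \<in> S) \<and> s \<longlonglongrightarrow> t \<and> (\<lambda>n. X (s n) \<omega>) \<longlonglongrightarrow> X t \<omega>"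
    using assms(1) unfolding separable_process_def by blast
  have "(SUP t\<in>T. f (X t \<omega>)) \<le> (SUP s\<in>S. f (X s \<omega>))" if \<omega>: "\<omega> \<in> space M - N" for \<omega>
  proof (rule SUP_least)
    fix t
    assume "t \<in> T"
    then obtain s where s: "\<And>n. s n \<in> S" "(\<lambda>n. X (s n) \<omega>) \<longlonglongrightarrow> X t \<omega>"
      using approx[OF \<omega>] by blast
    have "(\<lambda>n. f (X (s n) \<omega>)) \<longlonglongrightarrow> f (X t \<omega>)"
      using assms(2) s(2) by (intro isCont_tendsto_compose[where g = f]) (auto simp: continuous_on_eq_continuous_at)
    moreover have "f (X (s n) \<omega>) \<le> (SUP s\<in>S. f (X s \<omega>))" for n
      using s(1) by (intro SUP_upper)
    ultimately show "f (X t \<omega>) \<le> (SUP s\<in>S. f (X s \<omega>))"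
      by (intro LIMSEQ_le_const2) auto
  qed
  then have "AE \<omega> in M. (SUP t\<in>T. f (X t \<omega>)) \<le> (SUP s\<in>S. f (X s \<omega>))"
    using S(3) by (intro AE_I'[of N]) auto
  then show ?thesis
    using S by (intro that)
qed

lemma separable_process_nn_integral_SUP_le:
  fixes f :: "real \<Rightarrow> ennreal"
  assumes "separable_process M T X" "continuous_on UNIV f" "\<And>t. t \<in> T \<Longrightarrow> X t \<in> borel_measurable M"
    and "\<And>F. finite F \<Longrightarrow> F \<subseteq> T \<Longrightarrow> F \<noteq> {} \<Longrightarrow> (\<integral>\<^sup>+\<omega>. (SUP t\<in>F. f (X t \<omega>)) \<partial>M) \<le> R"
  shows "(\<integral>\<^sup>+\<omega>. (SUP t\<in>T. f (X t \<omega>)) \<partial>M) \<le> R"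
proof -
  obtain S where S: "countable S" "S \<subseteq> T" "AE \<omega> in M. (SUP t\<in>T. f (X t \<omega>)) \<le> (SUP s\<in>S. f (X s \<omega>))"
    using separable_process_SUP_le_AE[OF assms(1,2)] .
  have "(\<integral>\<^sup>+\<omega>. (SUP t\<in>T. f (X t \<omega>)) \<partial>M) \<le> (\<integral>\<^sup>+\<omega>. (SUP s\<in>S. f (X s \<omega>)) \<partial>M)"
    using S(3) by (rule nn_integral_mono_AE)
  also have "\<dots> \<le> R"
  proof (rule nn_integral_SUP_countable_le[where g = "\<lambda>s \<omega>. f (X s \<omega>)"])
    show "(\<lambda>\<omega>. f (X s \<omega>)) \<in> borel_measurable M" if "s \<in> S" for s
      using that S(2) by (intro borel_measurable_continuous_on[OF assms(2)] assms(3)) blast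
    show "(\<integral>\<^sup>+\<omega>. (SUP s\<in>F. f (X s \<omega>)) \<partial>M) \<le> R" if "finite F" "F \<subseteq> S" "F \<noteq> {}" for F
      using that S(2) by (intro assms(4)) auto
  qed (rule S(1))
  finally show ?thesis .
qed

section \<open>Gaussian processes with Holder continuous increments\<close>

locale holder_gaussian_process =
  fixes M :: "'a measure" and X :: "real \<times> real \<Rightarrow> 'a \<Rightarrow> real" and a b \<Delta> m c \<beta> :: real
  assumes prob_space: "prob_space M"
    and interval: "0 \<le> a" "a < b" and \<Delta>_pos: "0 < \<Delta>"
    and gaussian: "centered_gaussian_process M (Tset a b \<Delta>) X"
    and sd_le: "\<And>t. t \<in> Tset a b \<Delta> \<Longrightarrow> sqrt (prob_space.expectation M (\<lambda>\<omega>. (X t \<omega>)\<^sup>2)) \<le> m"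
    and m_pos: "0 < m" and c_pos: "0 < c" and \<beta>: "0 < \<beta>" "\<beta> \<le> 1"
    and increment_sd_le: "\<And>h t s. 0 < h \<Longrightarrow> t \<in> Tset a b \<Delta> \<Longrightarrow> s \<in> Tset a b \<Delta> \<Longrightarrow> dmax t s \<le> h \<Longrightarrow>
      sqrt (prob_space.expectation M (\<lambda>\<omega>. (X t \<omega> - X s \<omega>)\<^sup>2)) \<le> c * h powr \<beta>"
begin

abbreviation "T \<equiv> Tset a b \<Delta>"

lemma measurable_X: "t \<in> T \<Longrightarrow> X t \<in> borel_measurable M"
  using centered_gaussian_process_rv[OF gaussian] by (simp add: centered_gaussian_rv_def)

definition chaining_radius :: "real \<Rightarrow> nat \<Rightarrow> real" where
  "chaining_radius \<theta> j = (\<theta> * m / c) powr (1 / \<beta>) * \<theta> powr (j / \<beta>)"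

definition chaining_proj :: "real \<Rightarrow> nat \<Rightarrow> real \<times> real \<Rightarrow> real \<times> real" where
  "chaining_proj \<theta> j t =
    (SOME g. g \<in> Tset_grid a b \<Delta> (chaining_radius \<theta> j) \<and> dmax t g \<le> chaining_radius \<theta> j)"

lemma chaining_radius_pos: "0 < \<theta> \<Longrightarrow> 0 < chaining_radius \<theta> j"
  using m_pos c_pos by (simp add: chaining_radius_def)

lemma chaining_radius_powr:
  assumes "0 < \<theta>"
  shows "c * chaining_radius \<theta> j powr \<beta> = m * \<theta> ^ Suc j"
proof -
  have "chaining_radius \<theta> j powr \<beta> = ((\<theta> * m / c) powr (1 / \<beta>)) powr \<beta> * (\<theta> powr (j / \<beta>)) powr \<beta>"
    by (simp add: chaining_radius_def powr_mult)
  also have "\<dots> = \<theta> * m / c * \<theta> ^ j"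
    using assms m_pos c_pos \<beta> by (simp add: powr_powr powr_realpow)
  finally show ?thesis
    using c_pos by simp
qed

lemma chaining_proj:
  assumes "0 < \<theta>" "t \<in> T"
  shows "chaining_proj \<theta> j t \<in> Tset_grid a b \<Delta> (chaining_radius \<theta> j)"
    and "dmax t (chaining_proj \<theta> j t) \<le> chaining_radius \<theta> j"
proof -
  have "\<exists>g. g \<in> Tset_grid a b \<Delta> (chaining_radius \<theta> j) \<and> dmax t g \<le> chaining_radius \<theta> j"
    using Tset_grid_cover[OF interval(1) chaining_radius_pos assms(2)] assms(1) by blast
  then show "chaining_proj \<theta> j t \<in> Tset_grid a b \<Delta> (chaining_radius \<theta> j)"
    and "dmax t (chaining_proj \<theta> j t) \<le> chaining_radius \<theta> j"
    unfolding chaining_proj_def by (metis (mono_tags, lifting) someI_ex)+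
qed

lemma Tset_grid_chaining_subset: "0 < \<theta> \<Longrightarrow> Tset_grid a b \<Delta> (chaining_radius \<theta> j) \<subseteq> T"
  using Tset_grid_subset chaining_radius_pos interval \<Delta>_pos by simp

lemma chaining_proj_mem: "0 < \<theta> \<Longrightarrow> t \<in> T \<Longrightarrow> chaining_proj \<theta> j t \<in> T"
  using chaining_proj(1) Tset_grid_chaining_subset by blast

lemma sd_chaining_link_le:
  assumes "0 < \<theta>" "t \<in> T"
  shows "sqrt (prob_space.expectation M (\<lambda>\<omega>. (X t \<omega> - X (chaining_proj \<theta> j t) \<omega>)\<^sup>2)) \<le> m * \<theta> ^ Suc j"
  using increment_sd_le[OF chaining_radius_pos assms(2) chaining_proj_mem chaining_proj(2)]
    chaining_radius_powr assms by simp

lemma nn_integral_exp_abs_link_increment_le: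
  assumes "0 < \<theta>" "u \<in> T"
  shows "(\<integral>\<^sup>+\<omega>. ennreal (exp (\<mu> * \<bar>link_increment X (chaining_proj \<theta>) j u \<omega>\<bar>)) \<partial>M)
    \<le> ennreal (2 * exp (\<mu>\<^sup>2 * (m * \<theta> ^ j)\<^sup>2 / 2))"
proof (cases j)
  case 0
  then show ?thesis
    using centered_gaussian_rv_nn_integral_exp_abs[OF prob_space
        centered_gaussian_process_rv[OF gaussian assms(2)] sd_le[OF assms(2)]]
    by (simp add: link_increment_def)
next
  case (Suc i)
  then show ?thesis
    using centered_gaussian_rv_nn_integral_exp_abs[OF prob_space
        centered_gaussian_process_diff[OF gaussian assms(2) chaining_proj_mem[OF assms(1,2)]]
        sd_chaining_link_le[OF assms(1,2), of i]]
    by (simp add: link_increment_def)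
qed

lemma finite_SUP_exp_le_prod_levels:
  fixes K :: nat
  assumes F: "finite F" "F \<subseteq> T" "F \<noteq> {}" and "0 \<le> lam" "0 < \<theta>" "\<theta> < 1"
  defines "U j \<equiv> if j < K then Tset_grid a b \<Delta> (chaining_radius \<theta> j) else F"
  shows "(\<integral>\<^sup>+\<omega>. (SUP s\<in>F. ennreal (exp (lam * \<bar>X s \<omega>\<bar>))) \<partial>M)
    \<le> ennreal (\<Prod>j\<le>K. (real (card (U j)) *
      (2 * exp ((lam / geometric_weight \<theta> K j)\<^sup>2 * (m * \<theta> ^ j)\<^sup>2 / 2))) powr geometric_weight \<theta> K j)"
proof (rule chaining_nn_integral_SUP_exp_le[where D = "link_increment X (chaining_proj \<theta>)"])
  have U: "U j \<subseteq> T" for j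
    using F Tset_grid_chaining_subset[OF \<open>0 < \<theta>\<close>] by (simp add: U_def)
  show "link_increment X (chaining_proj \<theta>) j u \<in> borel_measurable M" if "u \<in> U j" for j u
    using measurable_X[OF subsetD[OF U that]] measurable_X[OF chaining_proj_mem[OF \<open>0 < \<theta>\<close> subsetD[OF U that]]]
    by (cases j) (simp_all add: link_increment_def[abs_def] borel_measurable_diff)
  show "(\<integral>\<^sup>+\<omega>. ennreal (exp (lam / geometric_weight \<theta> K j * \<bar>link_increment X (chaining_proj \<theta>) j u \<omega>\<bar>)) \<partial>M)
      \<le> ennreal (2 * exp ((lam / geometric_weight \<theta> K j)\<^sup>2 * (m * \<theta> ^ j)\<^sup>2 / 2))" if "u \<in> U j" for j u
    by (rule nn_integral_exp_abs_link_increment_le[OF \<open>0 < \<theta>\<close> subsetD[OF U that]])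
  show "\<exists>v. (\<forall>j\<in>{..K}. v j \<in> U j) \<and>
      (\<forall>\<omega>. \<bar>X s \<omega>\<bar> \<le> (\<Sum>j\<le>K. \<bar>link_increment X (chaining_proj \<theta>) j (v j) \<omega>\<bar>))" if "s \<in> F" for s
  proof (intro exI[of _ "\<lambda>j. foldr (chaining_proj \<theta>) [j..<K] s"] conjI ballI allI)
    show "foldr (chaining_proj \<theta>) [j..<K] s \<in> U j" if "j \<in> {..K}" for j
    proof (cases "j < K")
      case True
      have "foldr (chaining_proj \<theta>) [Suc j..<K] s \<in> T"
        using \<open>s \<in> F\<close> F(2) chaining_proj_mem[OF \<open>0 < \<theta>\<close>] by (intro foldr_mem) auto
      then show ?thesis
        using True chaining_proj(1)[OF \<open>0 < \<theta>\<close>] by (simp add: U_def upt_conv_Cons)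
    qed (use that \<open>s \<in> F\<close> in \<open>simp add: U_def\<close>)
    show "\<bar>X s \<omega>\<bar> \<le> (\<Sum>j\<le>K. \<bar>link_increment X (chaining_proj \<theta>) j (foldr (chaining_proj \<theta>) [j..<K] s) \<omega>\<bar>)"
      for \<omega>
      using sum_abs[of "\<lambda>j. link_increment X (chaining_proj \<theta>) j (foldr (chaining_proj \<theta>) [j..<K] s) \<omega>" "{..K}"]
      by (simp add: sum_link_increment_foldr)
  qed
qed (use assms in \<open>auto simp: U_def geometric_weight_pos sum_geometric_weight finite_Tset_grid Tset_grid_nonempty\<close>)

definition entropy_constant :: "real \<Rightarrow> real \<Rightarrow> real" where
  "entropy_constant \<epsilon> \<theta> = ((b - a) * \<Delta>) powr (\<epsilon> / 2) *
    ((2 * (\<theta> * m / c) powr (1 / \<beta>)) powr (- \<epsilon>) / (1 - \<epsilon> / \<beta>) + (max (2 / (b - a)) (4 / \<Delta>) / 2) powr \<epsilon>)"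

lemma entropy_constant_pos:
  assumes "0 < \<epsilon>" "\<epsilon> < \<beta>" "0 < \<theta>"
  shows "0 < entropy_constant \<epsilon> \<theta>"
proof -
  have "0 < max (2 / (b - a)) (4 / \<Delta>)"
    using interval by (simp add: less_max_iff_disj)
  then show ?thesis
    using assms interval \<Delta>_pos unfolding entropy_constant_def
    by (intro mult_pos_pos add_nonneg_pos divide_nonneg_pos) auto
qed

lemma finite_SUP_exp_le_entropy:
  assumes F: "finite F" "F \<subseteq> T" "F \<noteq> {}" and "0 \<le> lam" "0 < \<epsilon>" "\<epsilon> < \<beta>" "0 < \<theta>" "\<theta> < 1"
  shows "(\<integral>\<^sup>+\<omega>. (SUP s\<in>F. ennreal (exp (lam * \<bar>X s \<omega>\<bar>))) \<partial>M)
    \<le> ennreal (2 * exp (lam\<^sup>2 * m\<^sup>2 / (2 * (1 - \<theta>)\<^sup>2))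
      * (entropy_constant \<epsilon> \<theta> + \<theta> ^ K * real (card F) powr (\<epsilon> / 2)) powr (2 / \<epsilon>))"
proof -
  define G where "G j = Tset_grid a b \<Delta> (chaining_radius \<theta> j)" for j
  define N where "N j = real (card (if j < K then G j else F))" for j
  have N: "0 < N j" for j
    using F by (simp add: N_def G_def card_gt_0_iff finite_Tset_grid Tset_grid_nonempty)
  have "(\<integral>\<^sup>+\<omega>. (SUP s\<in>F. ennreal (exp (lam * \<bar>X s \<omega>\<bar>))) \<partial>M)
      \<le> ennreal (\<Prod>j\<le>K. (N j * (2 * exp ((lam / geometric_weight \<theta> K j)\<^sup>2 * (m * \<theta> ^ j)\<^sup>2 / 2)))
        powr geometric_weight \<theta> K j)"
    unfolding N_def G_def using F assms(4,7,8) by (rule finite_SUP_exp_le_prod_levels)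
  also have "\<dots> \<le> ennreal (2 * exp (lam\<^sup>2 * m\<^sup>2 / (2 * (1 - \<theta>)\<^sup>2))
      * (\<Sum>j\<le>K. geometric_weight \<theta> K j * N j powr (\<epsilon> / 2)) powr (2 / \<epsilon>))"
    using assms N by (intro ennreal_leI prod_geometric_levels_le) auto
  also have "\<dots> \<le> ennreal (2 * exp (lam\<^sup>2 * m\<^sup>2 / (2 * (1 - \<theta>)\<^sup>2))
      * (entropy_constant \<epsilon> \<theta> + \<theta> ^ K * real (card F) powr (\<epsilon> / 2)) powr (2 / \<epsilon>))"
  proof -
    have "(\<Sum>j\<le>K. geometric_weight \<theta> K j * N j powr (\<epsilon> / 2))
        = (\<Sum>j<K. (1 - \<theta>) * \<theta> ^ j * real (card (G j)) powr (\<epsilon> / 2)) + \<theta> ^ K * real (card F) powr (\<epsilon> / 2)"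
      by (simp add: lessThan_Suc_atMost[symmetric] geometric_weight_def N_def)
    also have "\<dots> \<le> entropy_constant \<epsilon> \<theta> + \<theta> ^ K * real (card F) powr (\<epsilon> / 2)"
    proof -
      have "0 \<le> real (card (G j)) \<and> real (card (G j))
          \<le> ((b - a) / (2 * ((\<theta> * m / c) powr (1 / \<beta>) * \<theta> powr (j / \<beta>))) + 1) *
            (\<Delta> / (2 * ((\<theta> * m / c) powr (1 / \<beta>) * \<theta> powr (j / \<beta>))) + 2)" for j
        using card_Tset_grid_le[of a b \<Delta> "chaining_radius \<theta> j"] chaining_radius_pos[OF \<open>0 < \<theta>\<close>] interval \<Delta>_pos
        by (simp add: G_def chaining_radius_def)
      then show ?thesis
        using sum_geometric_net_card_le[of a b \<Delta> "(\<theta> * m / c) powr (1 / \<beta>)" \<theta> \<epsilon> \<beta> K "\<lambda>j. real (card (G j))"]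
          interval \<Delta>_pos m_pos c_pos \<beta> assms
        by (simp add: entropy_constant_def)
    qed
    finally have "(\<Sum>j\<le>K. geometric_weight \<theta> K j * N j powr (\<epsilon> / 2))
        \<le> entropy_constant \<epsilon> \<theta> + \<theta> ^ K * real (card F) powr (\<epsilon> / 2)" .
    moreover have "0 \<le> geometric_weight \<theta> K j * N j powr (\<epsilon> / 2)" for j
      using geometric_weight_pos[of \<theta> K j] assms by simp
    ultimately show ?thesis
      using assms by (intro ennreal_leI mult_left_mono powr_mono2 sum_nonneg) auto
  qed
  finally show ?thesis .
qed

lemma finite_SUP_exp_le:
  assumes F: "finite F" "F \<subseteq> T" "F \<noteq> {}" and "0 \<le> lam" "0 < \<epsilon>" "\<epsilon> < \<beta>" "0 < \<theta>" "\<theta> < 1"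
  shows "(\<integral>\<^sup>+\<omega>. (SUP s\<in>F. ennreal (exp (lam * \<bar>X s \<omega>\<bar>))) \<partial>M)
    \<le> ennreal (2 * exp (lam\<^sup>2 * m\<^sup>2 / (2 * (1 - \<theta>)\<^sup>2)) * entropy_constant \<epsilon> \<theta> powr (2 / \<epsilon>))"
proof (rule LIMSEQ_le_const)
  define E0 where "E0 = 2 * exp (lam\<^sup>2 * m\<^sup>2 / (2 * (1 - \<theta>)\<^sup>2))"
  \<comment> \<open>the last level carries weight \<open>\<theta>\<^sup>K\<close>, so the cardinality of \<open>F\<close> disappears as \<open>K \<rightarrow> \<infinity>\<close>\<close>
  have "(\<lambda>K. \<theta> ^ K * real (card F) powr (\<epsilon> / 2)) \<longlonglongrightarrow> 0 * real (card F) powr (\<epsilon> / 2)"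
    using assms by (intro tendsto_mult_right LIMSEQ_power_zero) auto
  then have "(\<lambda>K. E0 * (entropy_constant \<epsilon> \<theta> + \<theta> ^ K * real (card F) powr (\<epsilon> / 2)) powr (2 / \<epsilon>))
      \<longlonglongrightarrow> E0 * (entropy_constant \<epsilon> \<theta> + 0) powr (2 / \<epsilon>)"
    using entropy_constant_pos[OF assms(5-7)] by (intro tendsto_intros) auto
  then show "(\<lambda>K. ennreal (E0 * (entropy_constant \<epsilon> \<theta> + \<theta> ^ K * real (card F) powr (\<epsilon> / 2)) powr (2 / \<epsilon>)))
      \<longlonglongrightarrow> ennreal (2 * exp (lam\<^sup>2 * m\<^sup>2 / (2 * (1 - \<theta>)\<^sup>2)) * entropy_constant \<epsilon> \<theta> powr (2 / \<epsilon>))"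
    by (simp add: E0_def tendsto_ennrealI)
  show "\<exists>N. \<forall>K\<ge>N. (\<integral>\<^sup>+\<omega>. (SUP s\<in>F. ennreal (exp (lam * \<bar>X s \<omega>\<bar>))) \<partial>M)
      \<le> ennreal (E0 * (entropy_constant \<epsilon> \<theta> + \<theta> ^ K * real (card F) powr (\<epsilon> / 2)) powr (2 / \<epsilon>))"
    using finite_SUP_exp_le_entropy[OF assms] by (auto simp: E0_def)
qed

lemma two_mul_entropy_constant_le:
  assumes "0 < \<epsilon>" "\<epsilon> < \<beta>" "0 < \<theta>"
  shows "2 * entropy_constant \<epsilon> \<theta> powr (2 / \<epsilon>) \<le> 2 powr (2 / \<epsilon> - 2) * (b - a) * \<Delta> *
    (c powr (2 / \<beta>) / ((1 - \<epsilon> / \<beta>) powr (2 / \<epsilon>) * (\<theta> * m) powr (2 / \<beta>)) + (max (2 / (b - a)) (4 / \<Delta>))\<^sup>2)"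
proof -
  define r0 where "r0 = (\<theta> * m / c) powr (1 / \<beta>)"
  have "r0 powr (- 2) = (\<theta> * m / c) powr (- (2 / \<beta>))"
    by (simp add: r0_def powr_powr)
  also have "\<dots> = c powr (2 / \<beta>) / (\<theta> * m) powr (2 / \<beta>)"
    by (simp add: powr_minus powr_divide)
  finally have "r0 powr (- 2) = c powr (2 / \<beta>) / (\<theta> * m) powr (2 / \<beta>)" .
  moreover have "0 < max (2 / (b - a)) (4 / \<Delta>)"
    using interval by (simp add: less_max_iff_disj)
  ultimately show ?thesis
    using two_mul_entropy_constant_powr_le[of "(b - a) * \<Delta>" r0 "max (2 / (b - a)) (4 / \<Delta>)" \<epsilon> "\<epsilon> / \<beta>"]
      assms interval \<Delta>_pos \<beta> m_pos c_pos
    by (simp add: entropy_constant_def r0_def ac_simps)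
qed

lemma nn_integral_SUP_exp_le:
  assumes "separable_process M T X" "0 \<le> lam" "0 < \<epsilon>" "\<epsilon> < \<beta>" "0 < \<theta>" "\<theta> < 1"
  shows "(\<integral>\<^sup>+\<omega>. (SUP t\<in>T. ennreal (exp (lam * \<bar>X t \<omega>\<bar>))) \<partial>M)
    \<le> ennreal (2 * exp (lam\<^sup>2 * m\<^sup>2 / (2 * (1 - \<theta>)\<^sup>2)) * entropy_constant \<epsilon> \<theta> powr (2 / \<epsilon>))"
proof (rule separable_process_nn_integral_SUP_le[where f = "\<lambda>x. ennreal (exp (lam * \<bar>x\<bar>))"])
  show "continuous_on UNIV (\<lambda>x. ennreal (exp (lam * \<bar>x\<bar>)))"
    by (intro continuous_on_ennreal continuous_intros)
  show "X t \<in> borel_measurable M" if "t \<in> T" for t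
    using that by (rule measurable_X)
  show "(\<integral>\<^sup>+\<omega>. (SUP t\<in>F. ennreal (exp (lam * \<bar>X t \<omega>\<bar>))) \<partial>M)
      \<le> ennreal (2 * exp (lam\<^sup>2 * m\<^sup>2 / (2 * (1 - \<theta>)\<^sup>2)) * entropy_constant \<epsilon> \<theta> powr (2 / \<epsilon>))"
    if "finite F" "F \<subseteq> T" "F \<noteq> {}" for F
    by (rule finite_SUP_exp_le[OF that assms(2-6)])
qed (rule assms(1))

end

theorem corollary6:
  fixes M :: "'a measure" and X :: "real \<times> real \<Rightarrow> 'a \<Rightarrow> real"
    and a b \<Delta> m c \<beta> lam \<epsilon> \<theta> :: real
  assumes "prob_space M"
    and "0 \<le> a" "a < b" "\<Delta> > 0"
    and "centered_gaussian_process M (Tset a b \<Delta>) X"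
    and "separable_process M (Tset a b \<Delta>) X"
    and "bdd_above ((\<lambda>t. sqrt (prob_space.expectation M (\<lambda>\<omega>. (X t \<omega>)\<^sup>2))) ` Tset a b \<Delta>)"
    and "m = (SUP t\<in>Tset a b \<Delta>. sqrt (prob_space.expectation M (\<lambda>\<omega>. (X t \<omega>)\<^sup>2)))"
    and "m > 0"
    and "c > 0" "0 < \<beta>" "\<beta> \<le> 1"
    and "\<And>h t s. h > 0 \<Longrightarrow> t \<in> Tset a b \<Delta> \<Longrightarrow> s \<in> Tset a b \<Delta> \<Longrightarrow> dmax t s \<le> h \<Longrightarrow>
           sqrt (prob_space.expectation M (\<lambda>\<omega>. (X t \<omega> - X s \<omega>)\<^sup>2)) \<le> c * h powr \<beta>"
    and "lam > 0" "0 < \<epsilon>" "\<epsilon> < \<beta>" "0 < \<theta>" "\<theta> < 1"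
  shows "(\<integral>\<^sup>+ \<omega>. (SUP t\<in>Tset a b \<Delta>. ennreal (exp (lam * \<bar>X t \<omega>\<bar>))) \<partial>M)
    \<le> ennreal (2 powr (2 / \<epsilon> - 2) * (b - a) * \<Delta> * exp (lam\<^sup>2 * m\<^sup>2 / (2 * (1 - \<theta>)\<^sup>2)) *
         (c powr (2 / \<beta>) / ((1 - \<epsilon> / \<beta>) powr (2 / \<epsilon>) * (\<theta> * m) powr (2 / \<beta>))
          + (max (2 / (b - a)) (4 / \<Delta>))\<^sup>2))"
proof -
  have sd_le: "sqrt (prob_space.expectation M (\<lambda>\<omega>. (X t \<omega>)\<^sup>2)) \<le> m" if "t \<in> Tset a b \<Delta>" for t
    unfolding assms(8) using that assms(7) by (rule cSUP_upper)
  interpret holder_gaussian_process M X a b \<Delta> m c \<beta>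
    by (rule holder_gaussian_process.intro[OF assms(1-5) sd_le assms(9-13)])
  have "(\<integral>\<^sup>+\<omega>. (SUP t\<in>T. ennreal (exp (lam * \<bar>X t \<omega>\<bar>))) \<partial>M)
      \<le> ennreal (2 * exp (lam\<^sup>2 * m\<^sup>2 / (2 * (1 - \<theta>)\<^sup>2)) * entropy_constant \<epsilon> \<theta> powr (2 / \<epsilon>))"
    using assms(6,14-18) by (intro nn_integral_SUP_exp_le) auto
  also have "\<dots> \<le> ennreal (2 powr (2 / \<epsilon> - 2) * (b - a) * \<Delta> * exp (lam\<^sup>2 * m\<^sup>2 / (2 * (1 - \<theta>)\<^sup>2)) *
         (c powr (2 / \<beta>) / ((1 - \<epsilon> / \<beta>) powr (2 / \<epsilon>) * (\<theta> * m) powr (2 / \<beta>))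
          + (max (2 / (b - a)) (4 / \<Delta>))\<^sup>2))"
    using mult_left_mono[OF two_mul_entropy_constant_le[OF assms(15-17)], of "exp (lam\<^sup>2 * m\<^sup>2 / (2 * (1 - \<theta>)\<^sup>2))"]
    by (intro ennreal_leI) (simp add: mult_ac)
  finally show ?thesis .
qed

end
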